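(* Let $V:\mathbb{R}\to\mathbb{R}$ be $1$-periodic and four times continuously differentiable, and $n\ge3$. Let $H_1$ be the $n\times n$ matrix $n^2$ times the periodic second-difference matrix (diagonal entries $2$, entries $-1$ at positions $(k,k\pm1)$ taken cyclically, i.e. including $(1,n)$ and $(n,1)$), let $H_2=\operatorname{diag}(V(0),V(1/n),\dots,V((n-1)/n))$, and let $D_1$ be the $n\times n$ matrix with $(D_1\vec v)_0=n(v_{n-1}-v_0)$ and $(D_1\vec v)_k=n(v_{k-1}-v_k)$ for $1\le k\le n-1$ (indices $0,\dots,n-1$). Then $H_1=D_1^\dagger D_1$, and there exist constants $\widetilde C_1,\widetilde C_2$ depending on $V$ but not on $n$ such that for every $\vec v\in\mathbb{C}^n$: $$\|[H_1,H_2]\vec v\|_\star\le\widetilde C_1(\|D_1\vec v\|_\star+\|\vec v\|_\star),\qquad \|[H_1,[H_1,H_2]]\vec v\|_\star\le\widetilde C_2(\|H_1\vec v\|_\star+\|\vec v\|_\star).$$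
   Context: The rescaled 2-norm is $\|\vec v\|_\star=n^{-1/2}\|\vec v\|$ where $\|\cdot\|$ is the Euclidean norm. $[A,B]=AB-BA$. This is the central finite-difference discretization with $n$ equidistant nodes $x_k=k/n$ on $[0,1]$ with periodic boundary conditions. *)

theory Defs
  imports "HOL-Analysis.Analysis"
begin

text \<open>n x n complex matrices and vectors in C^n are represented by functions on
  indices 0..n-1 (values at indices >= n are irrelevant).\<close>

type_synonym cmat = "nat \<Rightarrow> nat \<Rightarrow> complex"
type_synonym cvec = "nat \<Rightarrow> complex"

definition mat_vec :: "nat \<Rightarrow> cmat \<Rightarrow> cvec \<Rightarrow> cvec" where
  "mat_vec n A v = (\<lambda>i. \<Sum>j<n. A i j * v j)"

definition mat_mul :: "nat \<Rightarrow> cmat \<Rightarrow> cmat \<Rightarrow> cmat" where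
  "mat_mul n A B = (\<lambda>i k. \<Sum>j<n. A i j * B j k)"

definition mat_adj :: "cmat \<Rightarrow> cmat" where
  "mat_adj A = (\<lambda>i j. cnj (A j i))"

definition commut :: "nat \<Rightarrow> cmat \<Rightarrow> cmat \<Rightarrow> cmat" where
  "commut n A B = (\<lambda>i j. mat_mul n A B i j - mat_mul n B A i j)"

definition rnorm :: "nat \<Rightarrow> cvec \<Rightarrow> real" where
  "rnorm n v = sqrt (\<Sum>i<n. (cmod (v i))\<^sup>2) / sqrt (real n)"

definition H1 :: "nat \<Rightarrow> cmat" where
  "H1 n = (\<lambda>i j. of_nat (n^2) *
     (if i = j then 2 else if j = (i + 1) mod n \<or> i = (j + 1) mod n then -1 else 0))"

definition H2 :: "(real \<Rightarrow> real) \<Rightarrow> nat \<Rightarrow> cmat" where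
  "H2 V n = (\<lambda>i j. if i = j then complex_of_real (V (real i / real n)) else 0)"

definition D1 :: "nat \<Rightarrow> cmat" where
  "D1 n = (\<lambda>i j. of_nat n *
     ((if j = (i + n - 1) mod n then 1 else 0) - (if j = i then 1 else 0)))"

definition C4 :: "(real \<Rightarrow> real) \<Rightarrow> bool" where
  "C4 V \<longleftrightarrow> (\<exists>f :: nat \<Rightarrow> real \<Rightarrow> real. f 0 = V \<and>
     (\<forall>k<4. \<forall>x. (f k has_real_derivative f (Suc k) x) (at x)) \<and>
     continuous_on UNIV (f 4))"

end

theory Submission
  imports Defs
begin

(* Extending vectors n-periodically to the integers turns H_1, D_1 and H_2 into the discrete
   Laplacian L, the backward difference D and multiplication by the samples c_j = V(j/n).
   A discrete Leibniz rule expresses [L, c] and [L, [L, c]] through shifts of z, D z and L z,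
   with the scaled differences n^k Delta^k c as coefficients; by the mean value theorem these
   are bounded by sup |V^(k)|, which is finite because V^(k) is continuous and periodic.
   Shifts preserve the l2 norm over a period, and the term D z left in [L, [L, c]] is absorbed
   by summation by parts: |D z|^2 = <z, L z> <= |z| |L z|. *)

section \<open>Finite differences of smooth periodic functions\<close>

lemma periodic_add_of_int:
  fixes g :: "'a::ring_1 \<Rightarrow> 'b"
  assumes per: "\<And>x. g (x + 1) = g x"
  shows "g (x + of_int m) = g x"
proof (induction m rule: int_induct[where k = 0])
  case (step1 i)
  have "g (x + of_int (i + 1)) = g (x + of_int i + 1)" by (simp add: add.assoc)
  also have "\<dots> = g (x + of_int i)" by (rule per)
  finally show ?case using step1 by simp
next
  case (step2 i)
  have "g (x + of_int i) = g (x + of_int (i - 1) + 1)" by (simp add: algebra_simps)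
  also have "\<dots> = g (x + of_int (i - 1))" by (rule per)
  finally show ?case using step2 by simp
qed simp

lemma periodic_derivative:
  assumes "\<And>x. g (x + 1) = g x" and "\<And>x. (g has_real_derivative g' x) (at x)"
  shows "g' (x + 1) = g' x"
proof -
  have "((\<lambda>y. g (y + 1)) has_real_derivative g' (x + 1)) (at x)"
    using assms(2)[of "x + 1"] by (simp add: DERIV_shift)
  then have "(g has_real_derivative g' (x + 1)) (at x)"
    using assms(1) by simp
  then show ?thesis
    using assms(2) by (rule DERIV_unique)
qed

lemma periodic_continuous_bounded:
  fixes g :: "real \<Rightarrow> real"
  assumes "\<And>x. g (x + 1) = g x" and "continuous_on UNIV g"
  obtains M where "\<And>x. \<bar>g x\<bar> \<le> M"
proof -
  have "bounded (g ` {0..1})"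
    using assms(2) by (intro compact_imp_bounded compact_continuous_image)
      (auto intro: continuous_on_subset)
  then obtain M where M: "\<And>y. y \<in> {0..1} \<Longrightarrow> \<bar>g y\<bar> \<le> M"
    unfolding bounded_real by blast
  have "\<bar>g x\<bar> \<le> M" for x
  proof -
    have "g x = g (frac x + of_int \<lfloor>x\<rfloor>)"
      by (simp add: frac_def)
    also have "\<dots> = g (frac x)"
      using assms(1) by (rule periodic_add_of_int)
    finally show ?thesis
      using M[of "frac x"] frac_lt_1[of x] by simp
  qed
  then show ?thesis by (rule that)
qed

lemma C4_periodic_derivatives_bounded:
  fixes V :: "real \<Rightarrow> real"
  assumes periodic: "\<And>x. V (x + 1) = V x" and "C4 V"
  obtains f :: "nat \<Rightarrow> real \<Rightarrow> real" and B :: "nat \<Rightarrow> real"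
  where "f 0 = V" and "\<And>k x. k < 4 \<Longrightarrow> (f k has_real_derivative f (Suc k) x) (at x)"
    and "\<And>m x. m \<le> 4 \<Longrightarrow> \<bar>f m x\<bar> \<le> B m"
proof -
  obtain f :: "nat \<Rightarrow> real \<Rightarrow> real" where f0: "f 0 = V"
    and der: "\<And>k x. k < 4 \<Longrightarrow> (f k has_real_derivative f (Suc k) x) (at x)"
    and cont4: "continuous_on UNIV (f 4)"
    using \<open>C4 V\<close> unfolding C4_def by blast
  have per: "f m (x + 1) = f m x" if "m \<le> 4" for m x
    using that
  proof (induction m arbitrary: x)
    case (Suc m)
    have "\<And>x. f m (x + 1) = f m x" "\<And>x. (f m has_real_derivative f (Suc m) x) (at x)"
      using Suc by (auto intro: der)
    then show ?case
      by (rule periodic_derivative)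
  qed (simp add: f0 periodic)
  have cont: "continuous_on UNIV (f m)" if "m \<le> 4" for m
  proof (cases "m = 4")
    case False
    with that have "m < 4" by simp
    then show ?thesis
      using der by (intro DERIV_continuous_on) blast
  qed (simp add: cont4)
  have "\<exists>M. \<forall>x. \<bar>f m x\<bar> \<le> M" if "m \<le> 4" for m
    using periodic_continuous_bounded[OF per cont] that by metis
  then obtain B where "\<And>m x. m \<le> 4 \<Longrightarrow> \<bar>f m x\<bar> \<le> B m"
    by metis
  with f0 der show ?thesis by (rule that)
qed

fun fwd_diff :: "'a::plus \<Rightarrow> nat \<Rightarrow> ('a \<Rightarrow> 'b::minus) \<Rightarrow> 'a \<Rightarrow> 'b" where
  "fwd_diff h 0 g = g"
| "fwd_diff h (Suc k) g = (\<lambda>x. fwd_diff h k g (x + h) - fwd_diff h k g x)"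

lemma fwd_diff_has_real_derivative:
  assumes "\<And>x. (g has_real_derivative g' x) (at x)"
  shows "(fwd_diff h k g has_real_derivative fwd_diff h k g' x) (at x)"
proof (induction k arbitrary: x)
  case (Suc k)
  have "((\<lambda>y. fwd_diff h k g (y + h)) has_real_derivative fwd_diff h k g' (x + h)) (at x)"
    using Suc[of "x + h"] by (simp add: DERIV_shift)
  then show ?case
    using Suc[of x] by (auto intro: DERIV_diff)
qed (simp add: assms)

lemma abs_fwd_diff_le:
  fixes f :: "nat \<Rightarrow> real \<Rightarrow> real"
  assumes der: "\<And>k x. k < N \<Longrightarrow> (f k has_real_derivative f (Suc k) x) (at x)"
    and bnd: "\<And>m x. m \<le> N \<Longrightarrow> \<bar>f m x\<bar> \<le> B m"
    and "0 < h" and "j + k \<le> N"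
  shows "\<bar>fwd_diff h k (f j) x\<bar> \<le> h ^ k * B (j + k)"
  using \<open>j + k \<le> N\<close>
proof (induction k arbitrary: j x)
  case 0
  then show ?case using bnd by simp
next
  case (Suc k)
  have "\<And>y. (fwd_diff h k (f j) has_real_derivative fwd_diff h k (f (Suc j)) y) (at y)"
    using Suc.prems by (intro fwd_diff_has_real_derivative der) simp
  then obtain y
    where "fwd_diff h k (f j) (x + h) - fwd_diff h k (f j) x = h * fwd_diff h k (f (Suc j)) y"
    using MVT2[of x "x + h" "fwd_diff h k (f j)" "fwd_diff h k (f (Suc j))"] \<open>0 < h\<close> by auto
  moreover have "\<bar>fwd_diff h k (f (Suc j)) y\<bar> \<le> h ^ k * B (j + Suc k)"
    using Suc.IH[of "Suc j" y] Suc.prems by simp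
  ultimately show ?case
    using \<open>0 < h\<close> by (simp add: abs_mult mult_left_mono)
qed

definition grid_samples :: "(real \<Rightarrow> real) \<Rightarrow> nat \<Rightarrow> int \<Rightarrow> complex" where
  "grid_samples V n j = complex_of_real (V (of_int j / real n))"

definition diff_quot :: "nat \<Rightarrow> nat \<Rightarrow> (int \<Rightarrow> complex) \<Rightarrow> int \<Rightarrow> complex" where
  "diff_quot n k c j = of_nat n ^ k * fwd_diff 1 k c j"

lemma fwd_diff_grid_samples:
  "fwd_diff 1 k (grid_samples V n) j
     = complex_of_real (fwd_diff (1 / real n) k V (of_int j / real n))"
  by (induction k arbitrary: j) (simp_all add: grid_samples_def add_divide_distrib)

lemma norm_diff_quot_grid_samples_le:
  fixes f :: "nat \<Rightarrow> real \<Rightarrow> real"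
  assumes der: "\<And>k x. k < N \<Longrightarrow> (f k has_real_derivative f (Suc k) x) (at x)"
    and bnd: "\<And>m x. m \<le> N \<Longrightarrow> \<bar>f m x\<bar> \<le> B m"
    and "0 < n" and "k \<le> N"
  shows "cmod (diff_quot n k (grid_samples (f 0) n) j) \<le> B k"
proof -
  have "\<bar>fwd_diff (1 / real n) k (f 0) (of_int j / real n)\<bar> \<le> (1 / real n) ^ k * B k"
    using abs_fwd_diff_le[where f = f and B = B and N = N, OF der bnd, of "1 / real n" 0 k]
      \<open>0 < n\<close> \<open>k \<le> N\<close> by simp
  then show ?thesis
    using \<open>0 < n\<close> by (simp add: diff_quot_def fwd_diff_grid_samples norm_mult norm_power
        power_divide field_simps)
qed

section \<open>Difference operators on sequences over the integers\<close>

definition disc_lap :: "nat \<Rightarrow> (int \<Rightarrow> complex) \<Rightarrow> int \<Rightarrow> complex" where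
  "disc_lap n z j = of_nat n ^ 2 * (2 * z j - z (j + 1) - z (j - 1))"

definition back_diff :: "nat \<Rightarrow> (int \<Rightarrow> complex) \<Rightarrow> int \<Rightarrow> complex" where
  "back_diff n z j = of_nat n * (z (j - 1) - z j)"

definition lap_comm :: "nat \<Rightarrow> (int \<Rightarrow> complex) \<Rightarrow> (int \<Rightarrow> complex) \<Rightarrow> int \<Rightarrow> complex" where
  "lap_comm n c z j = disc_lap n (\<lambda>i. c i * z i) j - c j * disc_lap n z j"

lemma back_diff_periodic:
  assumes "\<And>j. z (j + int n) = z j"
  shows "back_diff n z (j + int n) = back_diff n z j"
  using assms[of "j - 1"] assms[of j] by (simp add: back_diff_def algebra_simps)

lemma disc_lap_periodic:
  assumes "\<And>j. z (j + int n) = z j"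
  shows "disc_lap n z (j + int n) = disc_lap n z j"
  using assms[of "j - 1"] assms[of j] assms[of "j + 1"] by (simp add: disc_lap_def algebra_simps)

lemma lap_comm_eq:
  "lap_comm n c z j = diff_quot n 1 c j * (back_diff n z (j + 1) + back_diff n z j)
     - diff_quot n 2 c (j - 1) * z (j - 1)"
  by (simp add: lap_comm_def disc_lap_def back_diff_def diff_quot_def numeral_eq_Suc
      algebra_simps)

lemma disc_lap_lap_comm_eq:
  "disc_lap n (lap_comm n c z) j - lap_comm n c (disc_lap n z) j =
     - diff_quot n 2 c (j - 1) * (disc_lap n z (j + 1) + 2 * disc_lap n z j + disc_lap n z (j - 1))
     - diff_quot n 3 c (j - 1) * (back_diff n z (j + 2) + back_diff n z (j + 1)
         + back_diff n z j + back_diff n z (j - 1))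
     + diff_quot n 4 c (j - 2) * z (j - 2)"
  by (simp add: lap_comm_def disc_lap_def back_diff_def diff_quot_def numeral_eq_Suc
      algebra_simps)

section \<open>The l2 norm over a period\<close>

definition period_norm :: "nat \<Rightarrow> (int \<Rightarrow> complex) \<Rightarrow> real" where
  "period_norm n z = L2_set (\<lambda>i. cmod (z (int i))) {..<n}"

lemma period_norm_nonneg: "0 \<le> period_norm n z"
  by (simp add: period_norm_def)

lemma period_norm_add_le:
  "period_norm n (\<lambda>j. z j + w j) \<le> period_norm n z + period_norm n w"
  unfolding period_norm_def
  by (rule order_trans[OF L2_set_mono L2_set_triangle_ineq]) (auto intro: norm_triangle_ineq)

lemma period_norm_uminus: "period_norm n (\<lambda>j. - z j) = period_norm n z"
  by (simp add: period_norm_def)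

lemma period_norm_diff_le:
  "period_norm n (\<lambda>j. z j - w j) \<le> period_norm n z + period_norm n w"
  using period_norm_add_le[of n z "\<lambda>j. - w j"] by (simp add: period_norm_uminus)

lemma period_norm_mult_le:
  assumes "\<And>j. cmod (a j) \<le> A"
  shows "period_norm n (\<lambda>j. a j * z j) \<le> A * period_norm n z"
proof -
  have "0 \<le> A" using order_trans[OF norm_ge_zero assms] .
  have "period_norm n (\<lambda>j. a j * z j) \<le> L2_set (\<lambda>i. A * cmod (z (int i))) {..<n}"
    unfolding period_norm_def
    by (rule L2_set_mono) (simp_all add: norm_mult assms mult_right_mono)
  also have "\<dots> = A * period_norm n z"
    unfolding period_norm_def using \<open>0 \<le> A\<close> by (rule L2_set_right_distrib[symmetric])
  finally show ?thesis .
qed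

lemma sum_periodic_shift:
  fixes g :: "int \<Rightarrow> 'a::cancel_comm_monoid_add"
  assumes per: "\<And>j. g (j + int n) = g j"
  shows "(\<Sum>i<n. g (int i + k)) = (\<Sum>i<n. g (int i))"
proof -
  have shift1: "(\<Sum>i<n. f (int i + 1)) = (\<Sum>i<n. f (int i))"
    if "\<And>j. f (j + int n) = f j" for f :: "int \<Rightarrow> 'a"
  proof -
    have "f 0 + (\<Sum>i<n. f (int i + 1)) = (\<Sum>i<Suc n. f (int i))"
      by (subst sum.lessThan_Suc_shift) (simp add: add.commute)
    also have "\<dots> = f 0 + (\<Sum>i<n. f (int i))"
      using that[of 0] by (simp add: add.commute)
    finally show ?thesis by simp
  qed
  have per_shifted: "g (j + int n + c) = g (j + c)" for j c
    using per[of "j + c"] by (simp add: ac_simps)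
  show ?thesis
  proof (induction k rule: int_induct[where k = 0])
    case (step1 i)
    have "(\<Sum>m<n. g (int m + (i + 1))) = (\<Sum>m<n. g (int m + 1 + i))"
      by (simp add: ac_simps)
    also have "\<dots> = (\<Sum>m<n. g (int m + i))"
      using shift1[of "\<lambda>j. g (j + i)"] per_shifted by simp
    finally show ?case using step1 by simp
  next
    case (step2 i)
    have "(\<Sum>m<n. g (int m + i)) = (\<Sum>m<n. g (int m + 1 + (i - 1)))"
      by (simp add: ac_simps)
    also have "\<dots> = (\<Sum>m<n. g (int m + (i - 1)))"
      using shift1[of "\<lambda>j. g (j + (i - 1))"] per_shifted by simp
    finally show ?case using step2 by simp
  qed simp
qed

lemma period_norm_shift:
  assumes "\<And>j. z (j + int n) = z j"
  shows "period_norm n (\<lambda>j. z (j + k)) = period_norm n z"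
  unfolding period_norm_def L2_set_def
  using sum_periodic_shift[of "\<lambda>j. (cmod (z j))\<^sup>2" n k] assms by simp

lemma sum_back_diff_mult_cnj:
  assumes per: "\<And>j. z (j + int n) = z j"
  shows "(\<Sum>i<n. back_diff n z (int i) * cnj (back_diff n z (int i)))
    = (\<Sum>i<n. cnj (z (int i)) * disc_lap n z (int i))"
proof -
  \<comment> \<open>Only the terms collected in F need an index shift to match those of cnj z * L z.\<close>
  define F where "F j = z (j - 1) * cnj (z (j - 1)) - z j * cnj (z (j - 1))" for j
  define G where "G j = z j * cnj (z j) - z (j - 1) * cnj (z j)" for j
  have "F (j + int n) = F j" for j
    using per[of "j - 1"] per[of j] by (simp add: F_def algebra_simps)
  then have shift: "(\<Sum>i<n. F (int i)) = (\<Sum>i<n. F (int i + 1))"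
    using sum_periodic_shift[of F n 1] by simp
  have "back_diff n z j * cnj (back_diff n z j) = of_nat n ^ 2 * (F j + G j)" for j
    by (simp add: back_diff_def F_def G_def power2_eq_square algebra_simps)
  then have "(\<Sum>i<n. back_diff n z (int i) * cnj (back_diff n z (int i)))
      = of_nat n ^ 2 * ((\<Sum>i<n. F (int i)) + (\<Sum>i<n. G (int i)))"
    by (simp add: sum.distrib[symmetric] sum_distrib_left)
  also have "\<dots> = (\<Sum>i<n. of_nat n ^ 2 * (F (int i + 1) + G (int i)))"
    by (simp add: shift sum.distrib[symmetric] sum_distrib_left)
  also have "\<dots> = (\<Sum>i<n. cnj (z (int i)) * disc_lap n z (int i))"
    by (simp add: disc_lap_def F_def G_def algebra_simps)
  finally show ?thesis .
qed

lemma period_norm_back_diff_sq_le: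
  assumes "\<And>j. z (j + int n) = z j"
  shows "(period_norm n (back_diff n z))\<^sup>2 \<le> period_norm n z * period_norm n (disc_lap n z)"
proof -
  have "(\<Sum>i<n. back_diff n z (int i) * cnj (back_diff n z (int i)))
      = of_real ((period_norm n (back_diff n z))\<^sup>2)"
    by (simp add: period_norm_def L2_set_def sum_nonneg flip: complex_norm_square)
  then have "(period_norm n (back_diff n z))\<^sup>2
      = cmod (\<Sum>i<n. back_diff n z (int i) * cnj (back_diff n z (int i)))"
    by (simp add: norm_power)
  also have "\<dots> = cmod (\<Sum>i<n. cnj (z (int i)) * disc_lap n z (int i))"
    using sum_back_diff_mult_cnj[of z n] assms by simp
  also have "\<dots> \<le> (\<Sum>i<n. \<bar>cmod (z (int i))\<bar> * \<bar>cmod (disc_lap n z (int i))\<bar>)"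
    using norm_sum[of "\<lambda>i. cnj (z (int i)) * disc_lap n z (int i)"] by (simp add: norm_mult)
  also have "\<dots> \<le> period_norm n z * period_norm n (disc_lap n z)"
    unfolding period_norm_def by (rule L2_set_mult_ineq)
  finally show ?thesis .
qed

lemma period_norm_back_diff_le:
  assumes "\<And>j. z (j + int n) = z j"
  shows "period_norm n (back_diff n z) \<le> (period_norm n z + period_norm n (disc_lap n z)) / 2"
proof (rule power2_le_imp_le)
  let ?a = "period_norm n z" and ?b = "period_norm n (disc_lap n z)"
  have "(period_norm n (back_diff n z))\<^sup>2 \<le> ?a * ?b"
    using assms by (rule period_norm_back_diff_sq_le)
  also have "\<dots> \<le> ((?a + ?b) / 2)\<^sup>2"
    using sum_squares_ge_zero[of "?a - ?b" 0] by (simp add: power2_eq_square field_simps)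
  finally show "(period_norm n (back_diff n z))\<^sup>2 \<le> ((?a + ?b) / 2)\<^sup>2" .
  show "0 \<le> (?a + ?b) / 2"
    by (simp add: period_norm_nonneg)
qed

lemma period_norm_lap_comm_le:
  assumes per: "\<And>j. z (j + int n) = z j"
    and dq1: "\<And>j. cmod (diff_quot n 1 c j) \<le> B1"
    and dq2: "\<And>j. cmod (diff_quot n 2 c j) \<le> B2"
  shows "period_norm n (lap_comm n c z)
    \<le> (2 * B1 + B2) * (period_norm n (back_diff n z) + period_norm n z)"
proof -
  let ?D = "back_diff n z"
  have "0 \<le> B1" "0 \<le> B2"
    using order_trans[OF norm_ge_zero dq1] order_trans[OF norm_ge_zero dq2] by auto
  have "lap_comm n c z
      = (\<lambda>j. diff_quot n 1 c j * (?D (j + 1) + ?D j) - diff_quot n 2 c (j - 1) * z (j - 1))"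
    by (rule ext) (rule lap_comm_eq)
  then have "period_norm n (lap_comm n c z)
      \<le> period_norm n (\<lambda>j. diff_quot n 1 c j * (?D (j + 1) + ?D j))
        + period_norm n (\<lambda>j. diff_quot n 2 c (j - 1) * z (j - 1))"
    by (simp add: period_norm_diff_le)
  also have "\<dots> \<le> B1 * period_norm n (\<lambda>j. ?D (j + 1) + ?D j) + B2 * period_norm n (\<lambda>j. z (j - 1))"
    by (intro add_mono period_norm_mult_le dq1 dq2)
  also have "\<dots> \<le> B1 * (2 * period_norm n ?D) + B2 * period_norm n z"
  proof -
    have "period_norm n (\<lambda>j. ?D (j + 1) + ?D j) \<le> 2 * period_norm n ?D"
      using period_norm_add_le[of n "\<lambda>j. ?D (j + 1)" ?D]
        period_norm_shift[of ?D n 1] back_diff_periodic[of z n] per by simp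
    moreover have "period_norm n (\<lambda>j. z (j - 1)) = period_norm n z"
      using period_norm_shift[of z n "-1"] per by simp
    ultimately show ?thesis
      using \<open>0 \<le> B1\<close> by (simp add: mult_left_mono)
  qed
  also have "\<dots> \<le> (2 * B1 + B2) * (period_norm n ?D + period_norm n z)"
    using \<open>0 \<le> B1\<close> \<open>0 \<le> B2\<close> period_norm_nonneg[of n ?D] period_norm_nonneg[of n z]
    by (simp add: algebra_simps)
  finally show ?thesis .
qed

lemma period_norm_disc_lap_lap_comm_le:
  assumes per: "\<And>j. z (j + int n) = z j"
    and dq2: "\<And>j. cmod (diff_quot n 2 c j) \<le> B2"
    and dq3: "\<And>j. cmod (diff_quot n 3 c j) \<le> B3"
    and dq4: "\<And>j. cmod (diff_quot n 4 c j) \<le> B4"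
  shows "period_norm n (\<lambda>j. disc_lap n (lap_comm n c z) j - lap_comm n c (disc_lap n z) j)
    \<le> (4 * B2 + 2 * B3 + B4) * (period_norm n (disc_lap n z) + period_norm n z)"
proof -
  let ?L = "disc_lap n z" and ?D = "back_diff n z"
  let ?SL = "\<lambda>j. ?L (j + 1) + 2 * ?L j + ?L (j - 1)"
  let ?SD = "\<lambda>j. ?D (j + 2) + ?D (j + 1) + ?D j + ?D (j - 1)"
  have "0 \<le> B2" "0 \<le> B3" "0 \<le> B4"
    using order_trans[OF norm_ge_zero dq2] order_trans[OF norm_ge_zero dq3]
      order_trans[OF norm_ge_zero dq4] by auto
  have Lper: "\<And>j. ?L (j + int n) = ?L j" and Dper: "\<And>j. ?D (j + int n) = ?D j"
    using disc_lap_periodic back_diff_periodic per by blast+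
  have SL: "period_norm n ?SL \<le> 4 * period_norm n ?L"
  proof -
    have "period_norm n ?SL
        \<le> period_norm n (\<lambda>j. ?L (j + 1)) + period_norm n (\<lambda>j. 2 * ?L j)
          + period_norm n (\<lambda>j. ?L (j - 1))"
      using period_norm_add_le[of n "\<lambda>j. ?L (j + 1) + 2 * ?L j" "\<lambda>j. ?L (j - 1)"]
        period_norm_add_le[of n "\<lambda>j. ?L (j + 1)" "\<lambda>j. 2 * ?L j"] by simp
    moreover have "period_norm n (\<lambda>j. 2 * ?L j) \<le> 2 * period_norm n ?L"
      by (rule period_norm_mult_le) simp
    ultimately show ?thesis
      using period_norm_shift[of ?L n 1, OF Lper] period_norm_shift[of ?L n "-1", OF Lper] by simp
  qed
  have SD: "period_norm n ?SD \<le> 4 * period_norm n ?D"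
  proof -
    have "period_norm n ?SD \<le> period_norm n (\<lambda>j. ?D (j + 2)) + period_norm n (\<lambda>j. ?D (j + 1))
        + period_norm n ?D + period_norm n (\<lambda>j. ?D (j - 1))"
      using period_norm_add_le[of n "\<lambda>j. ?D (j + 2) + ?D (j + 1) + ?D j" "\<lambda>j. ?D (j - 1)"]
        period_norm_add_le[of n "\<lambda>j. ?D (j + 2) + ?D (j + 1)" ?D]
        period_norm_add_le[of n "\<lambda>j. ?D (j + 2)" "\<lambda>j. ?D (j + 1)"] by simp
    then show ?thesis
      using period_norm_shift[of ?D n 2, OF Dper] period_norm_shift[of ?D n 1, OF Dper]
        period_norm_shift[of ?D n "-1", OF Dper] by simp
  qed
  let ?X = "\<lambda>j. diff_quot n 2 c (j - 1) * ?SL j"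
    and ?Y = "\<lambda>j. diff_quot n 3 c (j - 1) * ?SD j"
    and ?W = "\<lambda>j. diff_quot n 4 c (j - 2) * z (j - 2)"
  have "(\<lambda>j. disc_lap n (lap_comm n c z) j - lap_comm n c ?L j) = (\<lambda>j. - ?X j - ?Y j + ?W j)"
    by (rule ext) (simp add: disc_lap_lap_comm_eq)
  then have "period_norm n (\<lambda>j. disc_lap n (lap_comm n c z) j - lap_comm n c ?L j)
      \<le> period_norm n ?X + period_norm n ?Y + period_norm n ?W"
    using period_norm_add_le[of n "\<lambda>j. - ?X j - ?Y j" ?W]
      period_norm_diff_le[of n "\<lambda>j. - ?X j" ?Y]
    by (simp add: period_norm_uminus)
  also have "\<dots> \<le> B2 * period_norm n ?SL + B3 * period_norm n ?SD
      + B4 * period_norm n (\<lambda>j. z (j - 2))"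
    by (intro add_mono period_norm_mult_le dq2 dq3 dq4)
  also have "\<dots> \<le> B2 * (4 * period_norm n ?L) + B3 * (2 * (period_norm n z + period_norm n ?L))
      + B4 * period_norm n z"
  proof -
    have "period_norm n ?SD \<le> 2 * (period_norm n z + period_norm n ?L)"
      using SD period_norm_back_diff_le[of z n, OF per] by simp
    moreover have "period_norm n (\<lambda>j. z (j - 2)) = period_norm n z"
      using period_norm_shift[of z n "-2", OF per] by simp
    ultimately show ?thesis
      using SL \<open>0 \<le> B2\<close> \<open>0 \<le> B3\<close> \<open>0 \<le> B4\<close> by (intro add_mono mult_left_mono) auto
  qed
  also have "\<dots> \<le> (4 * B2 + 2 * B3 + B4) * (period_norm n ?L + period_norm n z)"
    using \<open>0 \<le> B2\<close> \<open>0 \<le> B3\<close> \<open>0 \<le> B4\<close> period_norm_nonneg[of n ?L] period_norm_nonneg[of n z]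
    by (simp add: algebra_simps)
  finally show ?thesis .
qed

section \<open>The matrices as operators on periodic sequences\<close>

lemma mat_vec_mat_mul: "mat_vec n (mat_mul n A B) v = mat_vec n A (mat_vec n B v)"
  unfolding mat_vec_def mat_mul_def
  by (auto simp: sum_distrib_left sum_distrib_right mult.assoc intro!: ext sum.swap)

lemma mat_vec_commut:
  "mat_vec n (commut n A B) v = (\<lambda>i. mat_vec n A (mat_vec n B v) i - mat_vec n B (mat_vec n A v) i)"
  unfolding commut_def mat_vec_mat_mul[symmetric]
  by (simp add: mat_vec_def left_diff_distrib sum_subtractf)

lemma Suc_mod_eq: "(i::nat) < n \<Longrightarrow> (i + 1) mod n = (if i + 1 = n then 0 else i + 1)"
  by auto

lemma pred_mod_eq: "(i::nat) < n \<Longrightarrow> (i + n - 1) mod n = (if i = 0 then n - 1 else i - 1)"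
  by (auto simp: le_mod_geq)

definition per_ext :: "nat \<Rightarrow> cvec \<Rightarrow> int \<Rightarrow> complex" where
  "per_ext n v j = v (nat (j mod int n))"

lemma per_ext_of_nat: "i < n \<Longrightarrow> per_ext n v (int i) = v i"
  by (simp add: per_ext_def)

lemma per_ext_succ: "per_ext n v (int i + 1) = v ((i + 1) mod n)"
proof -
  have "(int i + 1) mod int n = int ((i + 1) mod n)"
    by (simp add: of_nat_mod add.commute)
  then show ?thesis by (simp add: per_ext_def)
qed

lemma per_ext_pred:
  assumes "i < n"
  shows "per_ext n v (int i - 1) = v ((i + n - 1) mod n)"
proof -
  have "int i - 1 = int (i + n - 1) + (- 1) * int n"
    using assms by simp
  then have "(int i - 1) mod int n = int ((i + n - 1) mod n)"
    by (simp only: mod_mult_self1 of_nat_mod)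
  then show ?thesis by (simp add: per_ext_def)
qed

lemma per_ext_periodic: "per_ext n v (j + int n) = per_ext n v j"
  by (simp add: per_ext_def)

lemma per_ext_eqI:
  assumes "0 < n" and "\<And>i. i < n \<Longrightarrow> u i = f (int i)" and "\<And>j. f (j mod int n) = f j"
  shows "per_ext n u = f"
proof
  fix j
  have "nat (j mod int n) < n" "int (nat (j mod int n)) = j mod int n"
    using \<open>0 < n\<close> by (simp_all add: nat_less_iff)
  then show "per_ext n u j = f j"
    using assms(2)[of "nat (j mod int n)"] assms(3) by (simp add: per_ext_def)
qed

lemma rnorm_eq_period_norm: "rnorm n v = period_norm n (per_ext n v) / sqrt (real n)"
  by (simp add: rnorm_def period_norm_def L2_set_def per_ext_of_nat)

lemma H1_entry:
  assumes "3 \<le> n" "i < n" "j < n"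
  shows "H1 n i j = of_nat n ^ 2 * ((if j = i then 2 else 0) - (if j = (i + 1) mod n then 1 else 0)
    - (if j = (i + n - 1) mod n then 1 else 0))"
  using assms
  unfolding H1_def Suc_mod_eq[OF assms(2)] pred_mod_eq[OF assms(2)] Suc_mod_eq[OF assms(3)]
  by auto

lemma mat_vec_H1:
  assumes "3 \<le> n" "i < n"
  shows "mat_vec n (H1 n) v i = disc_lap n (per_ext n v) (int i)"
proof -
  have "mat_vec n (H1 n) v i = (\<Sum>j<n. of_nat n ^ 2 * ((if j = i then 2 * v j else 0)
      - (if j = (i + 1) mod n then v j else 0) - (if j = (i + n - 1) mod n then v j else 0)))"
    unfolding mat_vec_def using assms by (intro sum.cong refl) (simp add: H1_entry algebra_simps)
  also have "\<dots> = of_nat n ^ 2 * (2 * v i - v ((i + 1) mod n) - v ((i + n - 1) mod n))"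
    using assms by (simp add: sum_distrib_left[symmetric] sum_subtractf)
  also have "\<dots> = disc_lap n (per_ext n v) (int i)"
    using assms by (simp add: disc_lap_def per_ext_of_nat per_ext_succ per_ext_pred)
  finally show ?thesis .
qed

lemma mat_vec_D1:
  assumes "i < n"
  shows "mat_vec n (D1 n) v i = back_diff n (per_ext n v) (int i)"
proof -
  have "mat_vec n (D1 n) v i = (\<Sum>j<n. of_nat n * ((if j = (i + n - 1) mod n then v j else 0)
      - (if j = i then v j else 0)))"
    unfolding mat_vec_def D1_def by (intro sum.cong refl) (simp add: algebra_simps)
  also have "\<dots> = back_diff n (per_ext n v) (int i)"
    using assms by (simp add: sum_distrib_left[symmetric] sum_subtractf back_diff_def
        per_ext_of_nat per_ext_pred)
  finally show ?thesis .
qed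

lemma mat_vec_H2:
  assumes "i < n"
  shows "mat_vec n (H2 V n) v i = grid_samples V n (int i) * v i"
proof -
  have "mat_vec n (H2 V n) v i = (\<Sum>j<n. if j = i then grid_samples V n (int i) * v j else 0)"
    unfolding mat_vec_def H2_def grid_samples_def by (intro sum.cong refl) auto
  then show ?thesis using assms by simp
qed

lemma grid_samples_mod:
  fixes V :: "real \<Rightarrow> real"
  assumes periodic: "\<And>x. V (x + 1) = V x" and "0 < n"
  shows "grid_samples V n (j mod int n) = grid_samples V n j"
proof -
  have "real_of_int j = of_int (j div int n) * real n + of_int (j mod int n)"
    by (metis div_mult_mod_eq of_int_add of_int_mult of_int_of_nat_eq)
  then have "of_int j / real n = of_int (j mod int n) / real n + of_int (j div int n)"
    using \<open>0 < n\<close> by (simp add: field_simps)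
  then show ?thesis
    using periodic_add_of_int[of V, OF periodic] by (simp add: grid_samples_def)
qed

lemma per_ext_H1: "3 \<le> n \<Longrightarrow> per_ext n (mat_vec n (H1 n) v) = disc_lap n (per_ext n v)"
  by (rule per_ext_eqI)
    (simp_all add: mat_vec_H1 disc_lap_def per_ext_def mod_add_left_eq mod_diff_left_eq)

lemma per_ext_D1: "0 < n \<Longrightarrow> per_ext n (mat_vec n (D1 n) v) = back_diff n (per_ext n v)"
  by (rule per_ext_eqI) (simp_all add: mat_vec_D1 back_diff_def per_ext_def mod_diff_left_eq)

lemma per_ext_H2:
  fixes V :: "real \<Rightarrow> real"
  assumes "\<And>x. V (x + 1) = V x" and "0 < n"
  shows "per_ext n (mat_vec n (H2 V n) v) = (\<lambda>j. grid_samples V n j * per_ext n v j)"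
  using assms by (intro per_ext_eqI) (simp_all add: mat_vec_H2 grid_samples_mod per_ext_def)

lemma per_ext_diff: "per_ext n (\<lambda>i. a i - b i) = (\<lambda>j. per_ext n a j - per_ext n b j)"
  by (simp add: per_ext_def fun_eq_iff)

lemma per_ext_commut_H1_H2:
  fixes V :: "real \<Rightarrow> real"
  assumes "\<And>x. V (x + 1) = V x" and "3 \<le> n"
  shows "per_ext n (mat_vec n (commut n (H1 n) (H2 V n)) v)
    = lap_comm n (grid_samples V n) (per_ext n v)"
  using assms
  by (simp add: mat_vec_commut per_ext_diff per_ext_H1 per_ext_H2 fun_eq_iff lap_comm_def)

lemma per_ext_commut_H1_commut_H1_H2:
  fixes V :: "real \<Rightarrow> real"
  assumes "\<And>x. V (x + 1) = V x" and "3 \<le> n"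
  shows "per_ext n (mat_vec n (commut n (H1 n) (commut n (H1 n) (H2 V n))) v)
    = (\<lambda>j. disc_lap n (lap_comm n (grid_samples V n) (per_ext n v)) j
        - lap_comm n (grid_samples V n) (disc_lap n (per_ext n v)) j)"
proof -
  have "per_ext n (mat_vec n (commut n (H1 n) (commut n (H1 n) (H2 V n))) v)
    = (\<lambda>j. per_ext n (mat_vec n (H1 n) (mat_vec n (commut n (H1 n) (H2 V n)) v)) j
        - per_ext n (mat_vec n (commut n (H1 n) (H2 V n)) (mat_vec n (H1 n) v)) j)"
    by (simp only: mat_vec_commut[of n "H1 n" "commut n (H1 n) (H2 V n)"] per_ext_diff)
  then show ?thesis
    using assms by (simp add: per_ext_H1 per_ext_commut_H1_H2)
qed

lemma D1_entry:
  assumes "k < n" "l < n"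
  shows "D1 n k l = of_nat n * ((if k = (l + 1) mod n then 1 else 0) - (if k = l then 1 else 0))"
  using assms unfolding D1_def pred_mod_eq[OF assms(1)] Suc_mod_eq[OF assms(2)] by auto

lemma sum_indicator_diff_mult:
  fixes a b c d :: nat
  assumes "a < n" "b < n" "c < n" "d < n"
  shows "(\<Sum>k<n. ((if k = a then 1 else 0) - (if k = b then 1 else 0))
      * ((if k = c then 1 else 0) - (if k = d then 1 else 0)) :: complex)
    = (if a = c then 1 else 0) - (if a = d then 1 else 0) - (if b = c then 1 else 0)
      + (if b = d then 1 else 0)"
  using assms by (simp add: algebra_simps sum.distrib sum_subtractf if_distrib[of "\<lambda>x. x * _"]
      cong: if_cong)

lemma H1_eq_adj_D1_mult_D1:
  assumes "3 \<le> n" "i < n" "j < n"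
  shows "H1 n i j = mat_mul n (mat_adj (D1 n)) (D1 n) i j"
proof -
  have "mat_mul n (mat_adj (D1 n)) (D1 n) i j
      = of_nat n ^ 2 * (\<Sum>k<n. ((if k = (i + 1) mod n then 1 else 0) - (if k = i then 1 else 0))
          * ((if k = (j + 1) mod n then 1 else 0) - (if k = j then 1 else 0)))"
    unfolding mat_mul_def mat_adj_def sum_distrib_left
    using assms by (intro sum.cong refl) (simp add: D1_entry power2_eq_square)
  also have "\<dots> = of_nat n ^ 2 * ((if i = j then 2 else 0) - (if j = (i + 1) mod n then 1 else 0)
      - (if j = (i + n - 1) mod n then 1 else 0))"
  proof -
    have "((i + 1) mod n = (j + 1) mod n) = (i = j)" "(i = (j + 1) mod n) = (j = (i + n - 1) mod n)"
      using assms unfolding Suc_mod_eq[OF assms(2)] Suc_mod_eq[OF assms(3)] pred_mod_eq[OF assms(2)]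
      by auto
    then show ?thesis
      using assms by (simp add: sum_indicator_diff_mult eq_commute[of "(i + 1) mod n"])
  qed
  also have "\<dots> = H1 n i j"
    using assms by (simp add: H1_entry eq_commute)
  finally show ?thesis ..
qed

lemma rnorm_commut_H1_H2_le:
  fixes V :: "real \<Rightarrow> real"
  assumes "\<And>x. V (x + 1) = V x" and "3 \<le> n"
    and "\<And>j. cmod (diff_quot n 1 (grid_samples V n) j) \<le> B1"
    and "\<And>j. cmod (diff_quot n 2 (grid_samples V n) j) \<le> B2"
  shows "rnorm n (mat_vec n (commut n (H1 n) (H2 V n)) v)
    \<le> (2 * B1 + B2) * (rnorm n (mat_vec n (D1 n) v) + rnorm n v)"
proof -
  let ?z = "per_ext n v"
  have "rnorm n (mat_vec n (commut n (H1 n) (H2 V n)) v)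
      = period_norm n (lap_comm n (grid_samples V n) ?z) / sqrt (real n)"
    using assms by (simp add: rnorm_eq_period_norm per_ext_commut_H1_H2)
  also have "\<dots> \<le> (2 * B1 + B2) * (period_norm n (back_diff n ?z) + period_norm n ?z)
      / sqrt (real n)"
    using assms by (intro divide_right_mono period_norm_lap_comm_le per_ext_periodic) auto
  also have "\<dots> = (2 * B1 + B2) * (rnorm n (mat_vec n (D1 n) v) + rnorm n v)"
    using assms by (simp add: rnorm_eq_period_norm per_ext_D1 add_divide_distrib ring_distribs)
  finally show ?thesis .
qed

lemma rnorm_commut_H1_commut_H1_H2_le:
  fixes V :: "real \<Rightarrow> real"
  assumes "\<And>x. V (x + 1) = V x" and "3 \<le> n"
    and "\<And>j. cmod (diff_quot n 2 (grid_samples V n) j) \<le> B2"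
    and "\<And>j. cmod (diff_quot n 3 (grid_samples V n) j) \<le> B3"
    and "\<And>j. cmod (diff_quot n 4 (grid_samples V n) j) \<le> B4"
  shows "rnorm n (mat_vec n (commut n (H1 n) (commut n (H1 n) (H2 V n))) v)
    \<le> (4 * B2 + 2 * B3 + B4) * (rnorm n (mat_vec n (H1 n) v) + rnorm n v)"
proof -
  let ?c = "grid_samples V n" and ?z = "per_ext n v"
  have "rnorm n (mat_vec n (commut n (H1 n) (commut n (H1 n) (H2 V n))) v)
      = period_norm n (\<lambda>j. disc_lap n (lap_comm n ?c ?z) j - lap_comm n ?c (disc_lap n ?z) j)
        / sqrt (real n)"
    using assms by (simp add: rnorm_eq_period_norm per_ext_commut_H1_commut_H1_H2)
  also have "\<dots> \<le> (4 * B2 + 2 * B3 + B4) * (period_norm n (disc_lap n ?z) + period_norm n ?z)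
      / sqrt (real n)"
    using assms by (intro divide_right_mono period_norm_disc_lap_lap_comm_le per_ext_periodic) auto
  also have "\<dots> = (4 * B2 + 2 * B3 + B4) * (rnorm n (mat_vec n (H1 n) v) + rnorm n v)"
    using assms by (simp add: rnorm_eq_period_norm per_ext_H1 add_divide_distrib ring_distribs)
  finally show ?thesis .
qed

theorem lemma8:
  fixes V :: "real \<Rightarrow> real"
  assumes periodic: "\<And>x. V (x + 1) = V x"
    and smooth: "C4 V"
  shows "(\<forall>n\<ge>3. \<forall>i<n. \<forall>j<n. H1 n i j = mat_mul n (mat_adj (D1 n)) (D1 n) i j)
    \<and> (\<exists>C1 C2 :: real. \<forall>n\<ge>3. \<forall>v :: cvec.
         rnorm n (mat_vec n (commut n (H1 n) (H2 V n)) v)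
           \<le> C1 * (rnorm n (mat_vec n (D1 n) v) + rnorm n v)
       \<and> rnorm n (mat_vec n (commut n (H1 n) (commut n (H1 n) (H2 V n))) v)
           \<le> C2 * (rnorm n (mat_vec n (H1 n) v) + rnorm n v))"
proof -
  obtain f B where f0: "f 0 = V"
    and der: "\<And>k x. k < 4 \<Longrightarrow> (f k has_real_derivative f (Suc k) x) (at x)"
    and bnd: "\<And>m x. m \<le> 4 \<Longrightarrow> \<bar>f m x\<bar> \<le> B m"
    using C4_periodic_derivatives_bounded[OF periodic smooth] by blast
  have dq: "cmod (diff_quot n k (grid_samples V n) j) \<le> B k" if "3 \<le> n" "k \<le> 4" for n k j
    using norm_diff_quot_grid_samples_le[where f = f and B = B, OF der bnd] f0 that by simp
  have "\<forall>n\<ge>3. \<forall>v :: cvec.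
         rnorm n (mat_vec n (commut n (H1 n) (H2 V n)) v)
           \<le> (2 * B 1 + B 2) * (rnorm n (mat_vec n (D1 n) v) + rnorm n v)
       \<and> rnorm n (mat_vec n (commut n (H1 n) (commut n (H1 n) (H2 V n))) v)
           \<le> (4 * B 2 + 2 * B 3 + B 4) * (rnorm n (mat_vec n (H1 n) v) + rnorm n v)"
    by (intro allI impI conjI rnorm_commut_H1_H2_le[of V, OF periodic]
        rnorm_commut_H1_commut_H1_H2_le[of V, OF periodic] dq) simp_all
  then show ?thesis
    using H1_eq_adj_D1_mult_D1 by blast
qed

end
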